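(* Let $m\geq 1$ and let $\Lambda_m\subseteq\mathbb{R}^{2^m}$ be the Barnes–Wall lattice defined below, whose minimum is $2^{m-1}$. If $x\in\Lambda_m$ satisfies $(x,x)>2^{m-1}$, then $(x,x)\geq 2^{m-1}+2^{m-2}$.
   Context: Let $\mathcal{V}_m=\mathbb{F}_2^m$ and let $(e_v\mid v\in\mathcal{V}_m)$ be an orthonormal basis of Euclidean space $(\mathbb{R}^{2^m},(\cdot,\cdot))$ indexed by $\mathcal{V}_m$. For $\mathcal{U}\subseteq\mathcal{V}_m$ put $x_{\mathcal{U}}=\sum_{v\in\mathcal{U}}e_v$. Define $\Lambda_m=\langle 2^{\lfloor (m-r)/2\rfloor}x_{\mathcal{U}} \mid 0\le r\le m,\ \mathcal{U}\text{ an affine subspace of }\mathcal{V}_m\text{ of dimension }r\rangle_{\mathbb{Z}}$. The minimum (smallest value of $(x,x)$ for nonzero $x\in\Lambda_m$) equals $2^{m-1}$. *)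

theory Defs
  imports "HOL-Analysis.Analysis"
begin

text \<open>The space V_m = F_2^m, realised as boolean lists of length m; addition is
  componentwise exclusive or.\<close>

definition Vm :: "nat \<Rightarrow> bool list set" where
  "Vm m = {v. length v = m}"

definition vadd :: "bool list \<Rightarrow> bool list \<Rightarrow> bool list" where
  "vadd u v = map2 (\<noteq>) u v"

definition vzero :: "nat \<Rightarrow> bool list" where
  "vzero m = replicate m False"

text \<open>Linear subspace of F_2^m: contains 0 and is closed under addition
  (over F_2 closure under scalar multiplication is automatic).\<close>

definition lin_subspace :: "nat \<Rightarrow> bool list set \<Rightarrow> bool" where
  "lin_subspace m W \<longleftrightarrow> W \<subseteq> Vm m \<and> vzero m \<in> W \<and> (\<forall>u\<in>W. \<forall>v\<in>W. vadd u v \<in> W)"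

text \<open>Affine subspace of dimension r: a translate a + W of a linear subspace W of
  dimension r (over F_2, dim W = r iff card W = 2^r).\<close>

definition affine_subspace_dim :: "nat \<Rightarrow> nat \<Rightarrow> bool list set \<Rightarrow> bool" where
  "affine_subspace_dim m r U \<longleftrightarrow>
     (\<exists>a\<in>Vm m. \<exists>W. lin_subspace m W \<and> card W = 2 ^ r \<and> U = vadd a ` W)"

text \<open>Vectors of R^(2^m) with orthonormal basis (e_v | v in V_m) are functions
  V_m -> real (taken to vanish outside V_m).\<close>

definition xU :: "bool list set \<Rightarrow> (bool list \<Rightarrow> real)" where
  "xU U = (\<lambda>v. if v \<in> U then 1 else 0)"

definition ip :: "nat \<Rightarrow> (bool list \<Rightarrow> real) \<Rightarrow> (bool list \<Rightarrow> real) \<Rightarrow> real" where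
  "ip m x y = (\<Sum>v\<in>Vm m. x v * y v)"

definition int_span :: "(bool list \<Rightarrow> real) set \<Rightarrow> (bool list \<Rightarrow> real) set" where
  "int_span S = {(\<lambda>v. \<Sum>g\<in>G. of_int (c g) * g v) | G c. finite G \<and> G \<subseteq> S}"

definition BW_gens :: "nat \<Rightarrow> (bool list \<Rightarrow> real) set" where
  "BW_gens m = {(\<lambda>v. (2::real) ^ ((m - r) div 2) * xU U v) | r U.
                  r \<le> m \<and> affine_subspace_dim m r U}"

definition BW :: "nat \<Rightarrow> (bool list \<Rightarrow> real) set" where
  "BW m = int_span (BW_gens m)"

end

theory Submission
  imports Defs "HOL-Computational_Algebra.Primes"
begin

(* For x in Lambda_m, the sum of x over every affine i-flat of F_2^m is a multiple of
   2^(i div 2): a generator 2^((m - r) div 2) x_U meets an i-flat in 0 or 2^t points with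
   t >= i + r - m.  Only this divisibility is used: by induction on j, whenever x has it on
   a j-flat H, the weight N = sum of x_v^2 over H is 0, 2^(j-1) or at least 3 * 2^(j-2).

   If x vanishes on a hyperplane of H, a Hadamard step along the complementary hyperplane K
   gives a vector with the same divisibility on K and half the weight.  Otherwise every
   hyperplane carries nonzero weight, and the induction hypothesis applied to the pairs of
   parallel i-flats forces, by downward induction on i, twice the weight of each i-flat to
   be 2^i or 2N - (2^(j-i) - 1) 2^i.  At i = 0 integrality rules out 2 x_v^2 = 1, so all
   x_v^2 are equal and 2N = 2^j. *)

definition pow2_dvd :: "nat \<Rightarrow> real \<Rightarrow> bool" where
  "pow2_dvd e r \<longleftrightarrow> (\<exists>k::int. r = 2 ^ e * of_int k)"

lemma pow2_dvd_0 [simp]: "pow2_dvd e 0"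
  unfolding pow2_dvd_def by (rule exI[of _ 0]) simp

lemma pow2_dvd_add: "pow2_dvd e a \<Longrightarrow> pow2_dvd e b \<Longrightarrow> pow2_dvd e (a + b)"
  unfolding pow2_dvd_def by (metis distrib_left of_int_add)

lemma pow2_dvd_diff: "pow2_dvd e a \<Longrightarrow> pow2_dvd e b \<Longrightarrow> pow2_dvd e (a - b)"
  unfolding pow2_dvd_def by (metis right_diff_distrib of_int_diff)

lemma pow2_dvd_mult_of_int: "pow2_dvd e a \<Longrightarrow> pow2_dvd e (of_int c * a)"
  unfolding pow2_dvd_def by (metis mult.left_commute of_int_mult)

lemma pow2_dvd_sum:
  "finite G \<Longrightarrow> (\<And>g. g \<in> G \<Longrightarrow> pow2_dvd e (f g)) \<Longrightarrow> pow2_dvd e (\<Sum>g\<in>G. f g)"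
  by (induction G rule: finite_induct) (auto intro: pow2_dvd_add)

lemma pow2_dvd_power: "e \<le> t \<Longrightarrow> pow2_dvd e (2 ^ t)"
  unfolding pow2_dvd_def
  by (rule exI[of _ "2 ^ (t - e)"]) (simp add: power_add[symmetric])

lemma pow2_dvd_mono:
  assumes "e' \<le> e" and "pow2_dvd e a"
  shows "pow2_dvd e' a"
proof -
  obtain k where "a = 2 ^ e * of_int k"
    using assms(2) unfolding pow2_dvd_def by blast
  then have "a = 2 ^ e' * of_int (2 ^ (e - e') * k)"
    using assms(1) by (simp add: power_add[symmetric])
  then show ?thesis
    unfolding pow2_dvd_def by blast
qed

lemma pow2_dvd_Suc_half: "pow2_dvd (Suc e) a \<Longrightarrow> pow2_dvd e (a / 2)"
  unfolding pow2_dvd_def by auto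

lemma pow2_dvd_0_Ints: "pow2_dvd 0 a \<Longrightarrow> a \<in> \<int>"
  unfolding pow2_dvd_def by auto

lemma Ints_two_mult_square_neq_1:
  fixes a :: real
  assumes "a \<in> \<int>"
  shows "2 * a\<^sup>2 \<noteq> 1"
proof
  assume "2 * a\<^sup>2 = 1"
  obtain k where "a = of_int k"
    using assms by (auto elim: Ints_cases)
  with \<open>2 * a\<^sup>2 = 1\<close> have "of_int (2 * k\<^sup>2) = (of_int 1 :: real)"
    by simp
  then have "2 * k\<^sup>2 = 1"
    using of_int_eq_iff by blast
  then show False
    by presburger
qed

lemma Ints_nonneg_cases:
  fixes s :: real
  assumes "s \<in> \<int>" and "s \<ge> 0"
  shows "s = 0 \<or> s = 1 \<or> s \<ge> 2"
proof -
  obtain k where "s = of_int k"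
    using assms(1) by (auto elim: Ints_cases)
  moreover have "k = 0 \<or> k = 1 \<or> k \<ge> 2"
    using assms(2) \<open>s = of_int k\<close> by linarith
  ultimately show ?thesis
    by auto
qed

definition norm_gap :: "nat \<Rightarrow> real \<Rightarrow> bool" where
  "norm_gap j s \<longleftrightarrow> s = 0 \<or> 2 * s = 2 ^ j \<or> 4 * s \<ge> 3 * 2 ^ j"

lemma norm_gap_Ints_le_1:
  fixes x :: "'b \<Rightarrow> real"
  assumes "j \<le> 1" and "\<And>v. v \<in> H \<Longrightarrow> x v \<in> \<int>"
  shows "norm_gap j (\<Sum>v\<in>H. (x v)\<^sup>2)"
proof -
  have "(\<Sum>v\<in>H. (x v)\<^sup>2) \<in> \<int>"
    using assms(2) by (intro Ints_sum Ints_power)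
  then have "(\<Sum>v\<in>H. (x v)\<^sup>2) = 0 \<or> (\<Sum>v\<in>H. (x v)\<^sup>2) = 1 \<or> (\<Sum>v\<in>H. (x v)\<^sup>2) \<ge> 2"
    by (rule Ints_nonneg_cases) (simp add: sum_nonneg)
  moreover have "j = 0 \<or> j = 1"
    using assms(1) by linarith
  ultimately show ?thesis
    unfolding norm_gap_def by auto
qed

section \<open>Values constrained by pairwise sums\<close>

lemma pair_sums_four_values:
  fixes f :: "'b \<Rightarrow> real"
  assumes "finite A" and "card A \<ge> 3" and "a \<in> A"
    and pairs: "\<And>C C'. C \<in> A \<Longrightarrow> C' \<in> A \<Longrightarrow> C \<noteq> C' \<Longrightarrow> f C + f C' = \<nu> \<or> f C + f C' = h"
  shows "2 * f a = \<nu> \<or> 2 * f a = h \<or> 2 * f a = 2 * \<nu> - h \<or> 2 * f a = 2 * h - \<nu>"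
proof -
  have "card (A - {a}) > 0"
    using assms(1-3) by (simp add: card_Diff_singleton)
  then obtain b where b: "b \<in> A" "b \<noteq> a"
    by (metis DiffE card.empty ex_in_conv less_irrefl singletonI)
  have "card (A - {a, b}) > 0"
    using assms(1-3) b by (simp add: card_Diff_subset)
  then obtain c where c: "c \<in> A" "c \<noteq> a" "c \<noteq> b"
    by (metis DiffE card.empty ex_in_conv insertCI less_irrefl)
  have "f a + f b = \<nu> \<or> f a + f b = h" and "f a + f c = \<nu> \<or> f a + f c = h"
    and "f b + f c = \<nu> \<or> f b + f c = h"
    using pairs assms(3) b c by blast+
  \<comment> \<open>\<open>2 f a = (f a + f b) + (f a + f c) - (f b + f c)\<close>\<close>
  then show ?thesis
    by argo
qed

lemma pair_sums_shifted_absurd: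
  fixes f :: "'b \<Rightarrow> real"
  assumes fin: "finite A" and n: "real (card A) = n" and n4: "4 \<le> n" and \<nu>: "\<nu> > 0"
    and gap: "\<And>C. C \<in> A \<Longrightarrow> f C = 0 \<or> 2 * f C = \<nu> \<or> 4 * f C \<ge> 3 * \<nu>"
    and hi: "4 * (\<Sum>C\<in>A. f C) < 3 * n * \<nu>"
    and h: "2 * h = 2 * (\<Sum>C\<in>A. f C) - (n - 2) * \<nu>" and h_gt: "h > \<nu>"
    and pairs: "\<And>C C'. C \<in> A \<Longrightarrow> C' \<in> A \<Longrightarrow> C \<noteq> C' \<Longrightarrow> f C + f C' = \<nu> \<or> f C + f C' = h"
    and shifted: "\<And>C. C \<in> A \<Longrightarrow> 2 * f C = h \<or> 2 * f C = 2 * \<nu> - h"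
  shows False
proof -
  define S where "S = (\<Sum>C\<in>A. f C)"
  define Z where "Z = {C \<in> A. 2 * f C \<noteq> h}"
  have Z_zero: "f C = 0" and Z_h: "h = 2 * \<nu>" if "C \<in> Z" for C
  proof -
    have "C \<in> A" and fC: "2 * f C = 2 * \<nu> - h"
      using that shifted unfolding Z_def by auto
    then show "f C = 0"
      using gap h_gt \<nu> by fastforce
    with fC show "h = 2 * \<nu>"
      by simp
  qed
  have ZA: "Z \<subseteq> A"
    unfolding Z_def by blast
  have fin_Z: "finite Z"
    using fin ZA finite_subset by blast
  have card_Z: "card Z \<le> 1"
  proof (rule ccontr)
    assume "\<not> card Z \<le> 1"
    then obtain C C' where "C \<in> Z" "C' \<in> Z" "C \<noteq> C'"
      using card_le_Suc0_iff_eq[OF fin_Z] by auto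
    then show False
      using pairs[of C C'] Z_zero ZA \<nu> h_gt by force
  qed
  have "S = (\<Sum>C\<in>A - Z. f C) + (\<Sum>C\<in>Z. f C)"
    unfolding S_def using sum.subset_diff[OF ZA fin] by simp
  also have "(\<Sum>C\<in>Z. f C) = 0"
    using Z_zero by simp
  also have "(\<Sum>C\<in>A - Z. f C) = (\<Sum>C\<in>A - Z. h / 2)"
    by (rule sum.cong) (auto simp: Z_def)
  also have "\<dots> = (n - real (card Z)) * h / 2"
    using card_Diff_subset[OF fin_Z ZA] n card_mono[OF fin ZA] by (simp add: of_nat_diff)
  finally have S_eq: "S = (n - real (card Z)) * h / 2"
    by simp
  show False
  proof (cases "card Z = 0")
    case True
    then have "(n - 2) * (h - \<nu>) = 0"
      using S_eq h unfolding S_def[symmetric] by (simp add: algebra_simps)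
    then show False
      using n4 h_gt by simp
  next
    case False
    with card_Z have "card Z = 1"
      by simp
    then obtain C where "C \<in> Z"
      by (metis card_1_singletonE singletonI)
    then have "h = 2 * \<nu>"
      by (rule Z_h)
    with S_eq \<open>card Z = 1\<close> h have "n = 4" and "S = 3 * \<nu>"
      using \<nu> unfolding S_def[symmetric] by (simp_all add: algebra_simps)
    then show False
      using hi unfolding S_def[symmetric] by simp
  qed
qed

lemma pair_sums_two_values:
  fixes f :: "'b \<Rightarrow> real"
  assumes fin: "finite A" and n: "real (card A) = n" and n4: "4 \<le> n" and \<nu>: "\<nu> > 0"
    and gap: "\<And>C. C \<in> A \<Longrightarrow> f C = 0 \<or> 2 * f C = \<nu> \<or> 4 * f C \<ge> 3 * \<nu>"
    and lo: "n * \<nu> < 2 * (\<Sum>C\<in>A. f C)" and hi: "4 * (\<Sum>C\<in>A. f C) < 3 * n * \<nu>"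
    and h: "2 * h = 2 * (\<Sum>C\<in>A. f C) - (n - 2) * \<nu>"
    and pairs: "\<And>C C'. C \<in> A \<Longrightarrow> C' \<in> A \<Longrightarrow> C \<noteq> C' \<Longrightarrow> f C + f C' = \<nu> \<or> f C + f C' = h"
    and C0: "C0 \<in> A"
  shows "2 * f C0 = \<nu> \<or> 2 * f C0 = 2 * h - \<nu>"
proof (rule ccontr)
  have h_gt: "h > \<nu>"
    using h lo by (simp add: algebra_simps)
  have four: "2 * f C = \<nu> \<or> 2 * f C = h \<or> 2 * f C = 2 * \<nu> - h \<or> 2 * f C = 2 * h - \<nu>"
    if "C \<in> A" for C
    using pair_sums_four_values[OF fin _ that pairs] n n4 by simp
  assume "\<not> ?thesis"
  then have C0_values: "2 * f C0 = h \<or> 2 * f C0 = 2 * \<nu> - h"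
    using four[OF C0] by blast
  have "2 * f C = h \<or> 2 * f C = 2 * \<nu> - h" if "C \<in> A" for C
  proof (cases "C = C0")
    case False
    then have "f C0 + f C = \<nu> \<or> f C0 + f C = h"
      using pairs[OF C0 that] by simp
    then show ?thesis
      using four[OF that] C0_values h_gt by argo
  qed (use C0_values in simp)
  with pair_sums_shifted_absurd[OF fin n n4 \<nu> gap hi h h_gt pairs] show False
    by blast
qed

section \<open>Flats in an elementary abelian 2-group\<close>

locale f2_space =
  fixes V :: "'a set" and add :: "'a \<Rightarrow> 'a \<Rightarrow> 'a" and z :: 'a and M :: nat
  assumes finite_V: "finite V" and card_V: "card V = 2 ^ M"
    and z_in_V: "z \<in> V" and add_closed: "u \<in> V \<Longrightarrow> v \<in> V \<Longrightarrow> add u v \<in> V"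
    and add_commute: "u \<in> V \<Longrightarrow> v \<in> V \<Longrightarrow> add u v = add v u"
    and add_assoc: "u \<in> V \<Longrightarrow> v \<in> V \<Longrightarrow> w \<in> V \<Longrightarrow> add (add u v) w = add u (add v w)"
    and add_z_left: "u \<in> V \<Longrightarrow> add z u = u"
    and add_self: "u \<in> V \<Longrightarrow> add u u = z"
begin

definition linsub :: "'a set \<Rightarrow> bool" where
  "linsub W \<longleftrightarrow> W \<subseteq> V \<and> z \<in> W \<and> (\<forall>u\<in>W. \<forall>v\<in>W. add u v \<in> W)"

definition flat :: "nat \<Rightarrow> 'a set \<Rightarrow> bool" where
  "flat r U \<longleftrightarrow> (\<exists>a\<in>V. \<exists>W. linsub W \<and> card W = 2 ^ r \<and> U = add a ` W)"

lemma add_z_right: "u \<in> V \<Longrightarrow> add u z = u"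
  using add_commute add_z_left z_in_V by metis

lemma add_add_cancel: "a \<in> V \<Longrightarrow> u \<in> V \<Longrightarrow> add a (add a u) = u"
  by (metis add_assoc add_self add_z_left)

lemma add_left_commute: "u \<in> V \<Longrightarrow> v \<in> V \<Longrightarrow> w \<in> V \<Longrightarrow> add u (add v w) = add v (add u w)"
  using add_assoc[of u v w] add_assoc[of v u w] add_commute[of u v] by simp

lemma inj_on_add: "a \<in> V \<Longrightarrow> inj_on (add a) V"
  by (metis add_add_cancel inj_onI)

lemma linsub_subset: "linsub W \<Longrightarrow> W \<subseteq> V"
  unfolding linsub_def by blast

lemma linsub_z: "linsub W \<Longrightarrow> z \<in> W"
  unfolding linsub_def by blast

lemma linsub_add: "linsub W \<Longrightarrow> u \<in> W \<Longrightarrow> v \<in> W \<Longrightarrow> add u v \<in> W"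
  unfolding linsub_def by blast

lemma linsub_finite: "linsub W \<Longrightarrow> finite W"
  using finite_V finite_subset linsub_subset by blast

lemma linsub_inter: "linsub W \<Longrightarrow> linsub W' \<Longrightarrow> linsub (W \<inter> W')"
  unfolding linsub_def by blast

lemma linsub_singleton_z: "linsub {z}"
  unfolding linsub_def using z_in_V add_z_left by auto

lemma card_coset: "a \<in> V \<Longrightarrow> W \<subseteq> V \<Longrightarrow> card (add a ` W) = card W"
  by (meson card_image inj_on_add inj_on_subset)

lemma coset_subset: "a \<in> V \<Longrightarrow> W \<subseteq> V \<Longrightarrow> add a ` W \<subseteq> V"
  using add_closed by blast

lemma coset_self: "a \<in> V \<Longrightarrow> linsub W \<Longrightarrow> a \<in> add a ` W"
  by (metis add_z_right image_eqI linsub_z)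

lemma coset_mem_iff: "a \<in> V \<Longrightarrow> linsub W \<Longrightarrow> b \<in> V \<Longrightarrow> b \<in> add a ` W \<longleftrightarrow> add a b \<in> W"
proof
  assume "a \<in> V" "linsub W" "b \<in> V" "b \<in> add a ` W"
  then obtain w where "w \<in> W" "b = add a w"
    by blast
  then show "add a b \<in> W"
    using \<open>a \<in> V\<close> \<open>linsub W\<close> add_add_cancel linsub_subset by (metis subsetD)
next
  assume "a \<in> V" "b \<in> V" "add a b \<in> W"
  then show "b \<in> add a ` W"
    using add_add_cancel by (metis image_eqI)
qed

lemma coset_add_closed:
  assumes "a \<in> V" "linsub W" "b \<in> add a ` W" "w \<in> W"
  shows "add b w \<in> add a ` W"
proof -
  obtain u where u: "u \<in> W" "b = add a u"
    using assms(3) by blast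
  moreover have "u \<in> V" "w \<in> V"
    using u(1) assms(2,4) linsub_subset by blast+
  ultimately have "add b w = add a (add u w)"
    using add_assoc assms(1) by simp
  then show ?thesis
    using u assms linsub_add by blast
qed

lemma coset_rebase:
  assumes a: "a \<in> V" and W: "linsub W" and b: "b \<in> add a ` W"
  shows "add b ` W = add a ` W"
proof
  obtain u where u: "u \<in> W" "b = add a u"
    using b by blast
  have uV: "u \<in> V"
    using u W linsub_subset by blast
  then have bV: "b \<in> V"
    using u a add_closed by simp
  show "add b ` W \<subseteq> add a ` W"
    using coset_add_closed[OF a W b] by blast
  have "add b u = add a (add u u)"
    using u(2) add_assoc a uV by simp
  then have "a = add b u"
    using add_self[OF uV] add_z_right[OF a] by simp
  then have "a \<in> add b ` W"
    using u by blast
  then show "add a ` W \<subseteq> add b ` W"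
    using coset_add_closed[OF bV W] by blast
qed

lemma coset_eq_if_meet:
  "a \<in> V \<Longrightarrow> b \<in> V \<Longrightarrow> linsub W \<Longrightarrow> add a ` W \<inter> add b ` W \<noteq> {} \<Longrightarrow> add a ` W = add b ` W"
  by (metis coset_rebase disjoint_iff)

lemma coset_direction_mono:
  assumes "b \<in> V" "linsub D" "linsub E" "add b ` D \<subseteq> add b ` E"
  shows "D \<subseteq> E"
proof
  fix d
  assume d: "d \<in> D"
  then have "add b d \<in> add b ` E" and "add b d \<in> V"
    using assms add_closed linsub_subset by blast+
  then have "add b (add b d) \<in> E"
    using coset_mem_iff assms by blast
  then show "d \<in> E"
    using add_add_cancel assms d linsub_subset by (metis subsetD)
qed

lemma coset_partition:
  assumes D: "linsub D" and S: "S \<subseteq> V" and closed: "\<forall>s\<in>S. \<forall>d\<in>D. add s d \<in> S"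
  defines "A \<equiv> (\<lambda>b. add b ` D) ` S"
  shows "\<Union>A = S" and "\<And>C C'. C \<in> A \<Longrightarrow> C' \<in> A \<Longrightarrow> C \<noteq> C' \<Longrightarrow> C \<inter> C' = {}"
    and "finite A" and "card D * card A = card S"
proof -
  have DV: "D \<subseteq> V"
    using D linsub_subset by blast
  have "\<Union>A \<subseteq> S"
    unfolding A_def using closed by blast
  moreover have "S \<subseteq> \<Union>A"
  proof
    fix s
    assume "s \<in> S"
    then have "s \<in> add s ` D" and "add s ` D \<in> A"
      using coset_self D S unfolding A_def by blast+
    then show "s \<in> \<Union>A"
      by blast
  qed
  ultimately show U: "\<Union>A = S"
    by blast
  show disj: "C \<inter> C' = {}" if C: "C \<in> A" "C' \<in> A" and ne: "C \<noteq> C'" for C C'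
  proof -
    obtain b b' where "b \<in> S" "C = add b ` D" "b' \<in> S" "C' = add b' ` D"
      using C unfolding A_def by blast
    then show ?thesis
      using coset_eq_if_meet[OF _ _ D] S ne by blast
  qed
  have fin_S: "finite S"
    using S finite_V finite_subset by blast
  then show fin_A: "finite A"
    unfolding A_def by simp
  have card_C: "card C = card D" if C: "C \<in> A" for C
  proof -
    obtain b where "b \<in> S" "C = add b ` D"
      using C unfolding A_def by blast
    then show ?thesis
      using card_coset[OF _ DV] S by blast
  qed
  have "card D * card A = card (\<Union>A)"
    by (rule card_partition[OF fin_A]) (use U fin_S card_C disj in auto)
  then show "card D * card A = card S"
    using U by simp
qed

lemma card_linsub_pow2:
  assumes "linsub W"
  obtains r where "card W = 2 ^ r"
proof -
  have "card W * card ((\<lambda>b. add b ` W) ` V) = card V"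
    using coset_partition(4)[OF assms order_refl] add_closed linsub_subset[OF assms] by blast
  then have "card W dvd 2 ^ M"
    using card_V by (metis dvd_triv_left)
  then show ?thesis
    using that divides_primepow_nat[of 2] by auto
qed

lemma
  assumes "flat r U"
  shows flat_subset: "U \<subseteq> V" and flat_finite: "finite U"
    and card_flat: "card U = 2 ^ r" and flat_nonempty: "U \<noteq> {}"
proof -
  from assms obtain a W where a: "a \<in> V" and W: "linsub W" "card W = 2 ^ r" "U = add a ` W"
    unfolding flat_def by blast
  show "U \<subseteq> V"
    using W a coset_subset linsub_subset by blast
  then show "finite U"
    using finite_V finite_subset by blast
  show "card U = 2 ^ r"
    using W a card_coset linsub_subset by simp
  then show "U \<noteq> {}"
    by (metis card.empty power_not_zero zero_neq_numeral)
qed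

lemma flat_coset: "b \<in> V \<Longrightarrow> linsub W \<Longrightarrow> card W = 2 ^ r \<Longrightarrow> flat r (add b ` W)"
  unfolding flat_def by blast

lemma flat_at:
  assumes "flat r U" "b \<in> U"
  obtains W where "linsub W" "card W = 2 ^ r" "U = add b ` W"
proof -
  from assms obtain a W where "a \<in> V" "linsub W" "card W = 2 ^ r" "U = add a ` W"
    unfolding flat_def by blast
  then show ?thesis
    using that coset_rebase assms(2) by metis
qed

lemma flat_V: "flat M V"
proof -
  have "linsub V"
    unfolding linsub_def using z_in_V add_closed by blast
  moreover have "add z ` V = V"
    using add_z_left by simp
  ultimately show ?thesis
    using flat_coset z_in_V card_V by metis
qed

lemma flat_0_iff: "flat 0 F \<longleftrightarrow> (\<exists>v\<in>V. F = {v})"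
proof
  assume "flat 0 F"
  then obtain a W where a: "a \<in> V" and W: "linsub W" "card W = 1" "F = add a ` W"
    unfolding flat_def by auto
  then obtain w where "W = {w}"
    using card_1_singletonE by blast
  then have "W = {z}"
    using linsub_z[OF W(1)] by blast
  then show "\<exists>v\<in>V. F = {v}"
    using W a add_z_right by auto
next
  assume "\<exists>v\<in>V. F = {v}"
  then obtain v where "v \<in> V" "F = {v}"
    by blast
  then show "flat 0 F"
    using flat_coset[OF _ linsub_singleton_z, of v 0] add_z_right by simp
qed

lemma translate_coset:
  assumes c: "c \<in> V" and a: "a \<in> V" and W: "W \<subseteq> V"
  shows "add c ` add a ` W = add (add c a) ` W"
proof -
  have "add c (add a w) = add (add c a) w" if "w \<in> W" for w
    using add_assoc[OF c a] that W by (simp add: subset_iff)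
  then show ?thesis
    by (auto simp: image_iff)
qed

lemma flat_translate:
  assumes F: "flat i F" and c: "c \<in> V"
  shows "flat i (add c ` F)"
proof -
  obtain a W where a: "a \<in> V" and W: "linsub W" "card W = 2 ^ i" "F = add a ` W"
    using F unfolding flat_def by blast
  have "add c ` F = add (add c a) ` W"
    using translate_coset[OF c a linsub_subset[OF W(1)]] W(3) by simp
  then show ?thesis
    using flat_coset W add_closed a c by simp
qed

lemma linsub_union_coset:
  assumes D: "linsub D" and e: "e \<in> V"
  shows "linsub (D \<union> add e ` D)"
  unfolding linsub_def
proof (intro conjI ballI)
  have DV: "D \<subseteq> V"
    using D linsub_subset by blast
  show "D \<union> add e ` D \<subseteq> V"
    using DV coset_subset[OF e DV] by (rule Un_least)
  show "z \<in> D \<union> add e ` D"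
    using linsub_z[OF D] by (rule UnI1)
  have mixed: "add u (add e d) \<in> add e ` D" if u: "u \<in> D" and d: "d \<in> D" for u d
  proof -
    have "add u (add e d) = add e (add u d)"
      using add_left_commute[OF _ e] u d DV by (simp add: subset_iff)
    then show ?thesis
      using linsub_add[OF D u d] by blast
  qed
  fix u v
  assume u: "u \<in> D \<union> add e ` D" and v: "v \<in> D \<union> add e ` D"
  show "add u v \<in> D \<union> add e ` D"
  proof (cases "u \<in> D")
    case True
    with v show ?thesis
      using linsub_add[OF D] mixed by blast
  next
    case False
    then obtain d where d: "d \<in> D" "u = add e d"
      using u by blast
    have dV: "d \<in> V" and vV: "v \<in> V"
      using d(1) v DV coset_subset[OF e DV] by blast+
    have uv: "add u v = add e (add d v)"
      using add_assoc[OF e dV vV] d(2) by simp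
    have "add d v \<in> D \<union> add e ` D"
      using v d(1) linsub_add[OF D] mixed by blast
    then show ?thesis
    proof
      assume "add d v \<in> add e ` D"
      then obtain w where w: "w \<in> D" "add d v = add e w"
        by blast
      then have "add u v = w"
        using uv add_add_cancel[OF e] DV by (simp add: subset_iff)
      then show ?thesis
        using w(1) by blast
    qed (use uv in blast)
  qed
qed

lemma linsub_extend:
  assumes D: "linsub D" and e: "e \<in> V" "e \<notin> D"
  shows "linsub (D \<union> add e ` D)" and "card (D \<union> add e ` D) = 2 * card D"
    and "D \<inter> add e ` D = {}"
proof -
  have DV: "D \<subseteq> V"
    using D linsub_subset by blast
  show "linsub (D \<union> add e ` D)"
    using linsub_union_coset[OF D e(1)] .
  show disj: "D \<inter> add e ` D = {}"
  proof (rule ccontr)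
    assume "D \<inter> add e ` D \<noteq> {}"
    then obtain d d' where d: "d \<in> D" "d' \<in> D" "d = add e d'"
      by blast
    have d'V: "d' \<in> V"
      using d(2) DV by blast
    have "add d d' = add e (add d' d')"
      unfolding d(3) using add_assoc[OF e(1) d'V d'V] .
    then have "add d d' = e"
      using add_self[OF d'V] add_z_right[OF e(1)] by simp
    then show False
      using linsub_add[OF D d(1,2)] e(2) by simp
  qed
  show "card (D \<union> add e ` D) = 2 * card D"
    using card_Un_disjoint[OF linsub_finite[OF D] finite_imageI[OF linsub_finite[OF D]] disj]
      card_coset[OF e(1) DV] by simp
qed

lemma flat_union:
  assumes a: "a \<in> V" and b: "b \<in> V" and D: "linsub D" "card D = 2 ^ i"
    and ne: "add a ` D \<noteq> add b ` D"
  shows "flat (Suc i) (add a ` D \<union> add b ` D)"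
proof -
  have DV: "D \<subseteq> V"
    using D linsub_subset by blast
  have abV: "add a b \<in> V"
    using a b add_closed by blast
  have ab_notin: "add a b \<notin> D"
  proof
    assume "add a b \<in> D"
    then have "b \<in> add a ` D"
      using coset_mem_iff a b D by blast
    then show False
      using coset_rebase[OF a D(1)] ne by simp
  qed
  have "add a (add (add a b) d) = add b d" if "d \<in> D" for d
    using add_assoc[OF a abV] add_add_cancel[OF a b] that DV by (metis subsetD)
  then have "add a ` add (add a b) ` D = add b ` D"
    by (auto simp: image_iff)
  then have "add a ` D \<union> add b ` D = add a ` (D \<union> add (add a b) ` D)"
    by (simp add: image_Un)
  then show ?thesis
    using linsub_extend[OF D(1) abV ab_notin] D(2) a flat_coset by simp
qed

lemma linsub_exists:
  assumes E: "linsub E" and t: "2 ^ t \<le> card E"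
  obtains D where "linsub D" "D \<subseteq> E" "card D = 2 ^ t"
proof -
  have "\<exists>D. linsub D \<and> D \<subseteq> E \<and> card D = 2 ^ t"
    using t
  proof (induction t)
    case 0
    then show ?case
      using E linsub_singleton_z linsub_z by auto
  next
    case (Suc t)
    then obtain D where D: "linsub D" "D \<subseteq> E" "card D = 2 ^ t"
      by fastforce
    with Suc.prems have "\<not> E \<subseteq> D"
      using card_mono[OF linsub_finite[OF D(1)]] by fastforce
    then obtain e where e: "e \<in> E" "e \<notin> D"
      by blast
    have eV: "e \<in> V"
      using e E linsub_subset by blast
    have "add e ` D \<subseteq> E"
      using linsub_add[OF E e(1)] D(2) by blast
    then show ?case
      using linsub_extend[OF D(1) eV e(2)] D by auto
  qed
  then show ?thesis
    using that by blast
qed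

lemma flat_sub_exists:
  assumes "flat j H" and "i \<le> j"
  obtains F where "flat i F" and "F \<subseteq> H"
proof -
  obtain a where a: "a \<in> H"
    using flat_nonempty[OF assms(1)] by blast
  then obtain E where E: "linsub E" "card E = 2 ^ j" "H = add a ` E"
    using flat_at[OF assms(1)] by blast
  have "(2::nat) ^ i \<le> card E"
    using E(2) assms(2) by simp
  then obtain D where D: "linsub D" "D \<subseteq> E" "card D = 2 ^ i"
    using linsub_exists[OF E(1)] by blast
  have "a \<in> V"
    using a flat_subset[OF assms(1)] by blast
  then show ?thesis
    using that flat_coset[OF _ D(1) D(3)] D(2) E(3) by blast
qed

lemma card_add_fiber_le:
  assumes W1: "linsub W1" and W2: "linsub W2"
  shows "card {p \<in> W1 \<times> W2. add (fst p) (snd p) = s} \<le> card (W1 \<inter> W2)"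
proof (cases "\<exists>a0\<in>W1. \<exists>b0\<in>W2. s = add a0 b0")
  case True
  then obtain a0 b0 where p0: "a0 \<in> W1" "b0 \<in> W2" "s = add a0 b0"
    by blast
  have fin: "finite (W1 \<inter> W2)"
    using linsub_finite[OF W1] by blast
  have "{p \<in> W1 \<times> W2. add (fst p) (snd p) = s} \<subseteq> (\<lambda>w. (add a0 w, add b0 w)) ` (W1 \<inter> W2)"
  proof
    fix p
    assume "p \<in> {p \<in> W1 \<times> W2. add (fst p) (snd p) = s}"
    then obtain a b where ab: "p = (a, b)" "a \<in> W1" "b \<in> W2" "add a b = s"
      by auto
    have V: "a \<in> V" "b \<in> V" "a0 \<in> V" "b0 \<in> V"
      using ab p0 W1 W2 linsub_subset by auto
    have "add a0 a = add a0 (add (add a b) b)"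
      using add_assoc[OF V(1) V(2) V(2)] add_self[OF V(2)] add_z_right[OF V(1)] by simp
    also have "\<dots> = add (add a0 (add a0 b0)) b"
      using ab(4) p0(3) add_assoc[OF V(3) add_closed[OF V(3) V(4)] V(2)] by simp
    also have "\<dots> = add b0 b"
      using add_add_cancel[OF V(3) V(4)] by simp
    finally have eq: "add a0 a = add b0 b" .
    have "add a0 a \<in> W1 \<inter> W2"
      using linsub_add[OF W1 p0(1) ab(2)] linsub_add[OF W2 p0(2) ab(3)] eq by simp
    moreover have "a = add a0 (add a0 a)" and "b = add b0 (add a0 a)"
      using add_add_cancel[OF V(3) V(1)] add_add_cancel[OF V(4) V(2)] eq by simp_all
    ultimately show "p \<in> (\<lambda>w. (add a0 w, add b0 w)) ` (W1 \<inter> W2)"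
      using ab(1) by blast
  qed
  then have "card {p \<in> W1 \<times> W2. add (fst p) (snd p) = s}
      \<le> card ((\<lambda>w. (add a0 w, add b0 w)) ` (W1 \<inter> W2))"
    by (rule card_mono[OF finite_imageI[OF fin]])
  also have "\<dots> \<le> card (W1 \<inter> W2)"
    by (rule card_image_le[OF fin])
  finally show ?thesis .
next
  case False
  then have "{p \<in> W1 \<times> W2. add (fst p) (snd p) = s} = {}"
    by auto
  then show ?thesis
    by (simp only: card.empty le0)
qed

lemma card_linsub_inter:
  assumes W1: "linsub W1" and W2: "linsub W2" and E: "linsub E" and sub: "W1 \<subseteq> E" "W2 \<subseteq> E"
  shows "card W1 * card W2 \<le> card (W1 \<inter> W2) * card E"
proof -
  let ?f = "\<lambda>p. add (fst p) (snd p)"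
  let ?P = "W1 \<times> W2"
  have fin: "finite ?P"
    using linsub_finite W1 W2 by blast
  have img: "?f ` ?P \<subseteq> E"
    using sub linsub_add[OF E] by fastforce
  have "?P = (\<Union>s\<in>?f ` ?P. {p \<in> ?P. ?f p = s})"
    by auto
  then have "card ?P \<le> (\<Sum>s\<in>?f ` ?P. card {p \<in> ?P. ?f p = s})"
    using card_UN_le[of "?f ` ?P" "\<lambda>s. {p \<in> ?P. ?f p = s}"] fin by (metis finite_imageI)
  also have "\<dots> \<le> (\<Sum>s\<in>?f ` ?P. card (W1 \<inter> W2))"
    using card_add_fiber_le[OF W1 W2] by (meson sum_mono)
  also have "\<dots> \<le> card E * card (W1 \<inter> W2)"
    using card_mono[OF linsub_finite[OF E] img] by simp
  finally show ?thesis
    by (simp add: card_cartesian_product mult.commute)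
qed

lemma flat_inter:
  assumes F: "flat i F" and U: "flat r U" and ne: "F \<inter> U \<noteq> {}"
    and H: "flat j H" and FH: "F \<subseteq> H" and UH: "U \<subseteq> H"
  obtains t where "flat t (F \<inter> U)" and "i + r \<le> t + j"
proof -
  obtain c where c: "c \<in> F" "c \<in> U"
    using ne by blast
  obtain D where D: "linsub D" "card D = 2 ^ i" "F = add c ` D"
    using flat_at[OF F c(1)] by blast
  obtain D' where D': "linsub D'" "card D' = 2 ^ r" "U = add c ` D'"
    using flat_at[OF U c(2)] by blast
  obtain E where E: "linsub E" "card E = 2 ^ j" "H = add c ` E"
    using flat_at[OF H] c FH by blast
  have cV: "c \<in> V"
    using c F flat_subset by blast
  have "D \<subseteq> E" "D' \<subseteq> E"
    using coset_direction_mono[OF cV] D D' E FH UH by metis+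
  then have le: "card D * card D' \<le> card (D \<inter> D') * card E"
    using card_linsub_inter D D' E by blast
  obtain t where t: "card (D \<inter> D') = 2 ^ t"
    using card_linsub_pow2[OF linsub_inter[OF D(1) D'(1)]] by blast
  have "F \<inter> U = add c ` (D \<inter> D')"
    using D D' inj_on_add[OF cV] linsub_subset by (simp add: inj_on_image_Int)
  then have "flat t (F \<inter> U)"
    using flat_coset cV linsub_inter D D' t by simp
  moreover have "(2::nat) ^ (i + r) \<le> 2 ^ (t + j)"
    using le D D' E t by (simp add: power_add)
  then have "i + r \<le> t + j"
    by simp
  ultimately show ?thesis
    using that by blast
qed

lemma coset_split:
  assumes D: "linsub D" and E: "linsub E" and DE: "D \<subseteq> E" and cE: "card E = 2 * card D"
    and a: "a \<in> V" and e: "e \<in> E" "e \<notin> D"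
  shows "add a ` E = add a ` D \<union> add (add a e) ` D" and "add a ` D \<inter> add (add a e) ` D = {}"
proof -
  have eV: "e \<in> V"
    using e E linsub_subset by blast
  have aeV: "add a e \<in> V"
    using add_closed[OF a eV] .
  have DV: "D \<subseteq> V"
    using D linsub_subset by blast
  have "add a e \<notin> add a ` D"
    using coset_mem_iff[OF a D aeV] add_add_cancel[OF a eV] e(2) by simp
  then show disj: "add a ` D \<inter> add (add a e) ` D = {}"
    using coset_eq_if_meet[OF a aeV D] coset_self[OF aeV D] by blast
  have "add (add a e) d \<in> add a ` E" if "d \<in> D" for d
    using coset_add_closed[OF a E _ ] that DE coset_self[OF a E] e(1)
      add_assoc[OF a eV] add_left_commute by (metis subsetD)
  then have sub: "add a ` D \<union> add (add a e) ` D \<subseteq> add a ` E"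
    using DE by blast
  have fD: "finite D"
    using linsub_finite[OF D] .
  have "card (add a ` D \<union> add (add a e) ` D) = card (add a ` E)"
    using card_Un_disjoint[OF finite_imageI[OF fD] finite_imageI[OF fD] disj]
      card_coset[OF a DV] card_coset[OF aeV DV] cE card_coset[OF a linsub_subset[OF E]] by simp
  then show "add a ` E = add a ` D \<union> add (add a e) ` D"
    using card_subset_eq[OF finite_imageI[OF linsub_finite[OF E]] sub] by simp
qed

lemma translate_image_eq:
  assumes c: "c \<in> V" and S: "S \<subseteq> V" and closed: "\<And>v. v \<in> S \<Longrightarrow> add c v \<in> S"
  shows "add c ` S = S"
proof
  show "add c ` S \<subseteq> S"
    using closed by blast
  show "S \<subseteq> add c ` S"
  proof
    fix v
    assume v: "v \<in> S"
    then have "v = add c (add c v)"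
      using add_add_cancel[OF c] S by (simp add: subset_iff)
    then show "v \<in> add c ` S"
      using closed[OF v] by blast
  qed
qed

lemma hyperplane_complement:
  assumes H: "flat (Suc k) H" and K: "flat k K" "K \<subseteq> H"
  obtains c where "c \<in> V" and "add c ` K = H - K" and "add c ` H = H"
proof -
  obtain a where aK: "a \<in> K"
    using flat_nonempty[OF K(1)] by blast
  obtain D where D: "linsub D" "card D = 2 ^ k" "K = add a ` D"
    using flat_at[OF K(1) aK] by blast
  obtain E where E: "linsub E" "card E = 2 ^ Suc k" "H = add a ` E"
    using flat_at[OF H] aK K(2) by blast
  have aV: "a \<in> V"
    using aK flat_subset[OF K(1)] by blast
  have DE: "D \<subseteq> E"
    using coset_direction_mono[OF aV D(1) E(1)] K(2) D(3) E(3) by simp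
  have cE: "card E = 2 * card D"
    using D E by simp
  have "card D > 0"
    using linsub_z[OF D(1)] linsub_finite[OF D(1)] card_gt_0_iff by blast
  then have "E \<noteq> D"
    using cE by auto
  then obtain e where e: "e \<in> E" "e \<notin> D"
    using DE by blast
  have eV: "e \<in> V"
    using e E linsub_subset by blast
  note split = coset_split[OF D(1) E(1) DE cE aV e]
  have "add e ` K = add (add a e) ` D"
    using translate_coset[OF eV aV linsub_subset[OF D(1)]] D(3) add_commute[OF eV aV] by simp
  also have "\<dots> = H - K"
    using split D(3) E(3) by blast
  finally have eK: "add e ` K = H - K" .
  have "add e v \<in> H" if v: "v \<in> H" for v
  proof -
    have "v \<in> V"
      using v flat_subset[OF H] by blast
    then have "add e v = add v e"
      using add_commute[OF eV] by simp
    then show ?thesis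
      using coset_add_closed[OF aV E(1) _ e(1)] v E(3) by simp
  qed
  then have "add e ` H = H"
    using translate_image_eq[OF eV flat_subset[OF H]] by blast
  then show ?thesis
    using that eV eK by blast
qed

lemma flat_translate_cases:
  assumes F: "flat i F" and c: "c \<in> V"
  shows "add c ` F = F \<or> (F \<inter> add c ` F = {} \<and> flat (Suc i) (F \<union> add c ` F))"
proof -
  obtain a W where a: "a \<in> V" and W: "linsub W" "card W = 2 ^ i" "F = add a ` W"
    using F unfolding flat_def by blast
  have cF: "add c ` F = add (add c a) ` W"
    using translate_coset[OF c a linsub_subset[OF W(1)]] W(3) by simp
  have caV: "add c a \<in> V"
    using add_closed[OF c a] .
  show ?thesis
  proof (cases "add a ` W = add (add c a) ` W")
    case False
    then have "F \<inter> add c ` F = {}"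
      using coset_eq_if_meet[OF a caV W(1)] cF W(3) by blast
    moreover have "flat (Suc i) (F \<union> add c ` F)"
      using flat_union[OF a caV W(1) W(2) False] cF W(3) by simp
    ultimately show ?thesis
      by blast
  qed (use cF W(3) in simp)
qed

lemma flat_parallel_class:
  assumes H: "flat j H" and F: "flat i F" "F \<subseteq> H"
  obtains A where "F \<in> A" and "finite A" and "card A * 2 ^ i = 2 ^ j" and "\<Union>A = H"
    and "\<And>C. C \<in> A \<Longrightarrow> flat i C \<and> C \<subseteq> H"
    and "\<And>C C'. C \<in> A \<Longrightarrow> C' \<in> A \<Longrightarrow> C \<noteq> C' \<Longrightarrow> C \<inter> C' = {} \<and> flat (Suc i) (C \<union> C')"
proof -
  have HV: "H \<subseteq> V"
    using flat_subset[OF H] .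
  obtain a where aF: "a \<in> F"
    using flat_nonempty[OF F(1)] by blast
  have aH: "a \<in> H" and aV: "a \<in> V"
    using aF F(2) HV by blast+
  obtain D where D: "linsub D" "card D = 2 ^ i" "F = add a ` D"
    by (rule flat_at[OF F(1) aF])
  obtain E where E: "linsub E" "card E = 2 ^ j" "H = add a ` E"
    by (rule flat_at[OF H aH])
  have DE: "D \<subseteq> E"
    using coset_direction_mono[OF aV D(1) E(1)] F(2) D(3) E(3) by simp
  have closed: "\<forall>s\<in>H. \<forall>d\<in>D. add s d \<in> H"
    using coset_add_closed[OF aV E(1)] DE E(3) by blast
  define A where "A = (\<lambda>b. add b ` D) ` H"
  note partition = coset_partition[OF D(1) HV closed, folded A_def]
  have member: "flat i C \<and> C \<subseteq> H" if C: "C \<in> A" for C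
  proof -
    obtain b where b: "b \<in> H" "C = add b ` D"
      using C unfolding A_def by blast
    then have "flat i C"
      using flat_coset[OF _ D(1) D(2)] HV by blast
    moreover have "C \<subseteq> H"
      using b closed by blast
    ultimately show ?thesis
      by blast
  qed
  have pair: "C \<inter> C' = {} \<and> flat (Suc i) (C \<union> C')"
    if C: "C \<in> A" "C' \<in> A" and ne: "C \<noteq> C'" for C C'
  proof -
    obtain b b' where "b \<in> H" "C = add b ` D" "b' \<in> H" "C' = add b' ` D"
      using C unfolding A_def by blast
    then have "flat (Suc i) (C \<union> C')"
      using flat_union[OF _ _ D(1) D(2)] HV ne by blast
    then show ?thesis
      using partition(2)[OF C ne] by blast
  qed
  have "F \<in> A"
    unfolding A_def using aH D(3) by blast
  moreover have "card A * 2 ^ i = 2 ^ j"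
    using partition(4) D(2) card_flat[OF H] by (simp add: mult.commute)
  ultimately show ?thesis
    using that partition(1,3) member pair by blast
qed

end

section \<open>Folding along a hyperplane\<close>

context f2_space
begin

definition flat_divisible :: "'a set \<Rightarrow> ('a \<Rightarrow> real) \<Rightarrow> bool" where
  "flat_divisible H x \<longleftrightarrow> (\<forall>i F. flat i F \<longrightarrow> F \<subseteq> H \<longrightarrow> pow2_dvd (i div 2) (\<Sum>v\<in>F. x v))"

lemma flat_divisible_mono: "flat_divisible H x \<Longrightarrow> F \<subseteq> H \<Longrightarrow> flat_divisible F x"
  unfolding flat_divisible_def by blast

lemma flat_divisible_Ints:
  assumes "flat_divisible H x" and "v \<in> H" and "v \<in> V"
  shows "x v \<in> \<int>"
proof -
  have "flat 0 {v}"
    using flat_0_iff assms(3) by blast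
  then have "pow2_dvd 0 (\<Sum>u\<in>{v}. x u)"
    using assms(1,2) unfolding flat_divisible_def by fastforce
  then show ?thesis
    using pow2_dvd_0_Ints by simp
qed

lemma sum_translate:
  "S \<subseteq> V \<Longrightarrow> c \<in> V \<Longrightarrow> (\<Sum>v\<in>S. f (add c v)) = (\<Sum>v\<in>add c ` S. f v)"
  using sum.reindex[OF inj_on_subset[OF inj_on_add], of c S f] by simp

lemma supported_hyperplane_pow2_dvd:
  assumes H: "flat (Suc k) H" and K: "flat k K" "K \<subseteq> H" and div: "flat_divisible H x"
    and supp: "\<And>v. v \<in> H - K \<Longrightarrow> x v = 0" and F: "flat i F" "F \<subseteq> K"
  shows "pow2_dvd (Suc i div 2) (\<Sum>v\<in>F. x v)"
proof -
  obtain e where e: "e \<in> V" "add e ` K = H - K" "add e ` H = H"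
    by (rule hyperplane_complement[OF H K])
  have eF: "add e ` F \<subseteq> H - K"
    using e(2) F(2) by blast
  then have "add e ` F \<noteq> F"
    using F(2) flat_nonempty[OF F(1)] by blast
  then have disj: "F \<inter> add e ` F = {}" and flat_Suc: "flat (Suc i) (F \<union> add e ` F)"
    using flat_translate_cases[OF F(1) e(1)] by auto
  have "(\<Sum>v\<in>F \<union> add e ` F. x v) = (\<Sum>v\<in>F. x v) + (\<Sum>v\<in>add e ` F. x v)"
    using sum.union_disjoint[OF flat_finite[OF F(1)] finite_imageI[OF flat_finite[OF F(1)]] disj] .
  also have "(\<Sum>v\<in>add e ` F. x v) = 0"
    using supp eF by (intro sum.neutral) blast
  finally have "(\<Sum>v\<in>F \<union> add e ` F. x v) = (\<Sum>v\<in>F. x v)"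
    by simp
  moreover have "F \<union> add e ` F \<subseteq> H"
    using F(2) K(2) eF by blast
  then have "pow2_dvd (Suc i div 2) (\<Sum>v\<in>F \<union> add e ` F. x v)"
    using div flat_Suc unfolding flat_divisible_def by blast
  ultimately show ?thesis
    by simp
qed

definition butterfly :: "'a set \<Rightarrow> 'a \<Rightarrow> ('a \<Rightarrow> real) \<Rightarrow> 'a \<Rightarrow> real" where
  "butterfly K' c x v =
     (if v \<in> K' then (x v + x (add c v)) / 2 else (x v - x (add c v)) / 2)"

lemma butterfly_sum_squares:
  assumes K: "finite K" "K \<subseteq> V" and K': "K' \<subseteq> K" and c: "c \<in> V" "add c ` K' = K - K'"
  shows "(\<Sum>v\<in>K. (butterfly K' c x v)\<^sup>2) = (\<Sum>v\<in>K. (x v)\<^sup>2) / 2"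
proof -
  have K'V: "K' \<subseteq> V"
    using K' K by blast
  have split: "(\<Sum>v\<in>K. f v) = (\<Sum>v\<in>K'. f v + f (add c v))" for f :: "'a \<Rightarrow> real"
  proof -
    have "(\<Sum>v\<in>K. f v) = (\<Sum>v\<in>K'. f v) + (\<Sum>v\<in>K - K'. f v)"
      using sum.subset_diff[OF K' K(1)] by (simp add: add.commute)
    also have "(\<Sum>v\<in>K - K'. f v) = (\<Sum>v\<in>K'. f (add c v))"
      using sum_translate[OF K'V c(1), of f] c(2) by simp
    finally show ?thesis
      by (simp add: sum.distrib)
  qed
  have unshifted: "butterfly K' c x v = (x v + x (add c v)) / 2" if "v \<in> K'" for v
    using that unfolding butterfly_def by simp
  have shifted: "butterfly K' c x (add c v) = (x (add c v) - x v) / 2" if v: "v \<in> K'" for v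
  proof -
    have "add c v \<notin> K'"
      using c(2) v by blast
    moreover have "add c (add c v) = v"
      using add_add_cancel[OF c(1) subsetD[OF K'V v]] .
    ultimately show ?thesis
      unfolding butterfly_def by simp
  qed
  have "(\<Sum>v\<in>K'. (butterfly K' c x v)\<^sup>2 + (butterfly K' c x (add c v))\<^sup>2)
      = (\<Sum>v\<in>K'. ((x v)\<^sup>2 + (x (add c v))\<^sup>2) / 2)"
    by (intro sum.cong) (simp_all add: unshifted shifted power2_eq_square field_simps)
  then show ?thesis
    using split[of "\<lambda>v. (butterfly K' c x v)\<^sup>2"] split[of "\<lambda>v. (x v)\<^sup>2"]
    by (simp add: sum_divide_distrib)
qed

lemma sum_butterfly:
  assumes F: "finite F" "F \<subseteq> V" and c: "c \<in> V"
  shows "(\<Sum>v\<in>F. butterfly K' c x v)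
    = ((\<Sum>v\<in>F. x v) + (\<Sum>v\<in>add c ` F. x v)) / 2 - (\<Sum>v\<in>add c ` (F - K'). x v)"
proof -
  have "butterfly K' c x v = (x v + x (add c v)) / 2 - (if v \<in> K' then 0 else x (add c v))" for v
    unfolding butterfly_def by (simp add: field_simps)
  then have "(\<Sum>v\<in>F. butterfly K' c x v)
      = (\<Sum>v\<in>F. x v + x (add c v)) / 2 - (\<Sum>v\<in>F. if v \<in> K' then 0 else x (add c v))"
    by (simp add: sum_subtractf sum_divide_distrib)
  also have "(\<Sum>v\<in>F. if v \<in> K' then 0 else x (add c v)) = (\<Sum>v\<in>F - K'. x (add c v))"
    using F(1) by (intro sum.mono_neutral_cong_right) auto
  also have "\<dots> = (\<Sum>v\<in>add c ` (F - K'). x v)"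
    using sum_translate[of "F - K'" c x] F(2) c by blast
  also have "(\<Sum>v\<in>F. x v + x (add c v)) = (\<Sum>v\<in>F. x v) + (\<Sum>v\<in>add c ` F. x v)"
    using sum_translate[OF F(2) c, of x] by (simp add: sum.distrib)
  finally show ?thesis .
qed

lemma flat_divisible_butterfly:
  assumes K: "flat (Suc k) K" and K': "flat k K'" "K' \<subseteq> K"
    and c: "c \<in> V" "add c ` K = K" "add c ` K' = K - K'"
    and div: "\<And>i F. flat i F \<Longrightarrow> F \<subseteq> K \<Longrightarrow> pow2_dvd (Suc i div 2) (\<Sum>v\<in>F. x v)"
  shows "flat_divisible K (butterfly K' c x)"
  unfolding flat_divisible_def
proof (intro allI impI)
  fix i F
  assume F: "flat i F" "F \<subseteq> K"
  have FV: "F \<subseteq> V"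
    using F(2) flat_subset[OF K] by blast
  have fin_F: "finite F"
    using flat_finite[OF F(1)] .
  have cF: "add c ` F \<subseteq> K"
    using F(2) c(2) by blast
  have half: "pow2_dvd (i div 2) (((\<Sum>v\<in>F. x v) + (\<Sum>v\<in>add c ` F. x v)) / 2)"
  proof (cases "add c ` F = F")
    case True
    then show ?thesis
      using pow2_dvd_mono[OF _ div[OF F]] by simp
  next
    case False
    then have disj: "F \<inter> add c ` F = {}" and flat_Suc: "flat (Suc i) (F \<union> add c ` F)"
      using flat_translate_cases[OF F(1) c(1)] by auto
    have "pow2_dvd (Suc (i div 2)) (\<Sum>v\<in>F \<union> add c ` F. x v)"
      using div[OF flat_Suc] F(2) cF by simp
    then show ?thesis
      using sum.union_disjoint[OF fin_F finite_imageI[OF fin_F] disj, of x] pow2_dvd_Suc_half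
      by simp
  qed
  have shifted: "pow2_dvd (i div 2) (\<Sum>v\<in>add c ` (F - K'). x v)"
  proof (cases "F - K' = {}")
    case False
    have FK': "F - K' = F \<inter> add c ` K'"
      using c(3) F(2) by blast
    obtain t where t: "flat t (F - K')" "i + k \<le> t + Suc k"
      using flat_inter[OF F(1) flat_translate[OF K'(1) c(1)] _ K F(2)] c(3) False FK' by auto
    have "flat t (add c ` (F - K'))" and "add c ` (F - K') \<subseteq> K"
      using flat_translate[OF t(1) c(1)] cF by blast+
    then have "pow2_dvd (Suc t div 2) (\<Sum>v\<in>add c ` (F - K'). x v)"
      by (rule div)
    then show ?thesis
      by (rule pow2_dvd_mono[rotated]) (use t(2) in simp)
  qed (simp only: image_empty sum.empty pow2_dvd_0)
  show "pow2_dvd (i div 2) (\<Sum>v\<in>F. butterfly K' c x v)"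
    unfolding sum_butterfly[OF fin_F FV c(1)] using pow2_dvd_diff[OF half shifted] .
qed

lemma norm_gap_supported_hyperplane:
  assumes IH: "\<And>K y. flat (Suc k) K \<Longrightarrow> flat_divisible K y \<Longrightarrow> norm_gap (Suc k) (\<Sum>v\<in>K. (y v)\<^sup>2)"
    and H: "flat (Suc (Suc k)) H" and K: "flat (Suc k) K" "K \<subseteq> H" and div: "flat_divisible H x"
    and supp: "\<And>v. v \<in> H - K \<Longrightarrow> x v = 0"
  shows "norm_gap (Suc (Suc k)) (\<Sum>v\<in>H. (x v)\<^sup>2)"
proof -
  obtain K' where K': "flat k K'" "K' \<subseteq> K"
    using flat_sub_exists[OF K(1), of k] by auto
  obtain c where c: "c \<in> V" "add c ` K' = K - K'" "add c ` K = K"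
    by (rule hyperplane_complement[OF K(1) K'])
  have "flat_divisible K (butterfly K' c x)"
    using flat_divisible_butterfly[OF K(1) K' c(1,3,2)]
      supported_hyperplane_pow2_dvd[OF H K div supp] by blast
  then have "norm_gap (Suc k) (\<Sum>v\<in>K. (butterfly K' c x v)\<^sup>2)"
    by (rule IH[OF K(1)])
  moreover have "(\<Sum>v\<in>K. (butterfly K' c x v)\<^sup>2) = (\<Sum>v\<in>K. (x v)\<^sup>2) / 2"
    using butterfly_sum_squares[OF flat_finite[OF K(1)] flat_subset[OF K(1)] K'(2) c(1,2)] .
  moreover have "(\<Sum>v\<in>H. (x v)\<^sup>2) = (\<Sum>v\<in>K. (x v)\<^sup>2)"
    using sum.mono_neutral_right[OF flat_finite[OF H] K(2), of "\<lambda>v. (x v)\<^sup>2"] supp by simp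
  ultimately show ?thesis
    unfolding norm_gap_def by auto
qed

section \<open>Flats of nonzero weight\<close>

context
  fixes H :: "'a set" and k :: nat and w :: "'a \<Rightarrow> real"
  assumes H: "flat (Suc (Suc k)) H"
    and gap_below: "\<And>i F. flat i F \<Longrightarrow> F \<subseteq> H \<Longrightarrow> i \<le> Suc k \<Longrightarrow> norm_gap i (\<Sum>v\<in>F. w v)"
    and hyperplane_nonzero: "\<And>K. flat (Suc k) K \<Longrightarrow> K \<subseteq> H \<Longrightarrow> (\<Sum>v\<in>K. w v) \<noteq> 0"
    and not_gap: "\<not> norm_gap (Suc (Suc k)) (\<Sum>v\<in>H. w v)"
begin

lemma hyperplane_sum_split:
  assumes K: "flat (Suc k) K" "K \<subseteq> H"
  shows "flat (Suc k) (H - K)" and "(\<Sum>v\<in>K. w v) + (\<Sum>v\<in>H - K. w v) = (\<Sum>v\<in>H. w v)"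
proof -
  obtain c where "c \<in> V" "add c ` K = H - K" "add c ` H = H"
    by (rule hyperplane_complement[OF H K])
  then show "flat (Suc k) (H - K)"
    using flat_translate[OF K(1)] by metis
  show "(\<Sum>v\<in>K. w v) + (\<Sum>v\<in>H - K. w v) = (\<Sum>v\<in>H. w v)"
    using sum.subset_diff[OF K(2) flat_finite[OF H], of w] by simp
qed

lemma hyperplane_sum_ge:
  assumes "flat (Suc k) K" and "K \<subseteq> H"
  shows "(\<Sum>v\<in>K. w v) \<ge> 2 ^ k"
proof -
  have "norm_gap (Suc k) (\<Sum>v\<in>K. w v)" and "(\<Sum>v\<in>K. w v) \<noteq> 0"
    using gap_below hyperplane_nonzero assms by auto
  moreover have "(0::real) \<le> 2 ^ k" and "(2::real) ^ Suc k = 2 * 2 ^ k"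
    by simp_all
  ultimately show ?thesis
    unfolding norm_gap_def by linarith
qed

lemma total_sum_gt: "2 ^ Suc (Suc k) < 2 * (\<Sum>v\<in>H. w v)"
proof -
  obtain K where K: "flat (Suc k) K" "K \<subseteq> H"
    using flat_sub_exists[OF H, of "Suc k"] by auto
  have "2 ^ Suc (Suc k) \<le> 2 * (\<Sum>v\<in>H. w v)"
    using hyperplane_sum_ge[OF K] hyperplane_sum_ge[OF hyperplane_sum_split(1)[OF K]]
      hyperplane_sum_split(2)[OF K] by simp
  moreover have "2 * (\<Sum>v\<in>H. w v) \<noteq> 2 ^ Suc (Suc k)"
    using not_gap unfolding norm_gap_def by blast
  ultimately show ?thesis
    by linarith
qed

lemma hyperplane_two_values:
  assumes K: "flat (Suc k) K" "K \<subseteq> H"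
  shows "2 * (\<Sum>v\<in>K. w v) = 2 ^ Suc k \<or> 2 * (\<Sum>v\<in>K. w v) = 2 * (\<Sum>v\<in>H. w v) - 2 ^ Suc k"
proof -
  note split = hyperplane_sum_split[OF K]
  have "norm_gap (Suc k) (\<Sum>v\<in>K. w v)" and "norm_gap (Suc k) (\<Sum>v\<in>H - K. w v)"
    using gap_below K split(1) by blast+
  moreover have "(\<Sum>v\<in>K. w v) \<noteq> 0" and "(\<Sum>v\<in>H - K. w v) \<noteq> 0"
    using hyperplane_nonzero K split(1) by blast+
  moreover have "4 * (\<Sum>v\<in>H. w v) < 3 * 2 ^ Suc (Suc k)"
    using not_gap unfolding norm_gap_def by auto
  ultimately show ?thesis
    using split(2) unfolding norm_gap_def by auto
qed

lemma flat_two_values_step: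
  assumes i: "i \<le> k" and F: "flat i F" "F \<subseteq> H"
    and IH: "\<And>G. flat (Suc i) G \<Longrightarrow> G \<subseteq> H \<Longrightarrow>
      2 * (\<Sum>v\<in>G. w v) = 2 ^ Suc i \<or>
      2 * (\<Sum>v\<in>G. w v) = 2 * (\<Sum>v\<in>H. w v) - (2 ^ (Suc (Suc k) - Suc i) - 1) * 2 ^ Suc i"
  shows "2 * (\<Sum>v\<in>F. w v) = 2 ^ i \<or>
    2 * (\<Sum>v\<in>F. w v) = 2 * (\<Sum>v\<in>H. w v) - (2 ^ (Suc (Suc k) - i) - 1) * 2 ^ i"
proof -
  define g where "g C = (\<Sum>v\<in>C. w v)" for C
  define N where "N = g H"
  obtain A where FA: "F \<in> A" and fin_A: "finite A" and card_A: "card A * 2 ^ i = 2 ^ Suc (Suc k)"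
    and cover: "\<Union>A = H" and member: "\<And>C. C \<in> A \<Longrightarrow> flat i C \<and> C \<subseteq> H"
    and pairs: "\<And>C C'. C \<in> A \<Longrightarrow> C' \<in> A \<Longrightarrow> C \<noteq> C' \<Longrightarrow> C \<inter> C' = {} \<and> flat (Suc i) (C \<union> C')"
    using flat_parallel_class[OF H F] by blast
  define d where "d = k - i"
  have exps: "Suc (Suc k) - i = Suc (Suc d)" "Suc (Suc k) - Suc i = Suc d"
    "Suc (Suc k) = i + Suc (Suc d)"
    using i unfolding d_def by auto
  define n :: real where "n = 2 ^ Suc (Suc d)"
  define \<nu> :: real where "\<nu> = 2 ^ i"
  define h where "h = N - (n - 2) * \<nu> / 2"
  have n_\<nu>: "n * \<nu> = 2 ^ Suc (Suc k)"
    unfolding n_def \<nu>_def exps(3) by (simp add: power_add)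
  have card_A_n: "real (card A) = n"
    using card_A unfolding exps(3) n_def power_add by (simp flip: of_nat_power)
  have "\<forall>C\<in>A. finite C" and "\<forall>C\<in>A. \<forall>C'\<in>A. C \<noteq> C' \<longrightarrow> C \<inter> C' = {}"
    using member flat_finite pairs by blast+
  then have sum_A: "(\<Sum>C\<in>A. g C) = N"
    unfolding g_def N_def using sum.Union_disjoint[of A w] cover by simp
  \<comment> \<open>Two distinct flats of the parallel class of \<open>F\<close> span an \<open>(i + 1)\<close>-flat, whose weight
    the induction hypothesis restricts to \<open>\<nu>\<close> or \<open>h\<close>.\<close>
  have "2 * g F = \<nu> \<or> 2 * g F = 2 * h - \<nu>"
  proof (rule pair_sums_two_values[OF fin_A card_A_n _ _ _ _ _ _ _ FA])
    show "4 \<le> n" and "0 < \<nu>"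
      unfolding n_def \<nu>_def by simp_all
    show "g C = 0 \<or> 2 * g C = \<nu> \<or> 3 * \<nu> \<le> 4 * g C" if "C \<in> A" for C
      using gap_below member[OF that] i unfolding g_def \<nu>_def norm_gap_def by auto
    show "n * \<nu> < 2 * (\<Sum>C\<in>A. g C)" and "4 * (\<Sum>C\<in>A. g C) < 3 * n * \<nu>"
      using n_\<nu> total_sum_gt not_gap unfolding sum_A unfolding N_def g_def norm_gap_def by auto
    show "2 * h = 2 * (\<Sum>C\<in>A. g C) - (n - 2) * \<nu>"
      unfolding sum_A h_def by simp
    show "g C + g C' = \<nu> \<or> g C + g C' = h" if "C \<in> A" "C' \<in> A" "C \<noteq> C'" for C C'
    proof -
      have "g (C \<union> C') = g C + g C'"
        unfolding g_def using pairs[OF that] member that flat_finite by (meson sum.union_disjoint)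
      moreover have "(2 ^ (Suc (Suc k) - Suc i) - 1) * 2 ^ Suc i = (n - 2) * \<nu>"
        unfolding exps n_def \<nu>_def by (simp add: algebra_simps)
      ultimately show ?thesis
        using IH[of "C \<union> C'"] pairs[OF that] member that unfolding g_def N_def h_def \<nu>_def
        by (auto simp: field_simps)
    qed
  qed
  moreover have "2 * h - \<nu> = 2 * N - (2 ^ (Suc (Suc k) - i) - 1) * 2 ^ i"
    unfolding h_def n_def \<nu>_def exps by (simp add: field_simps)
  ultimately show ?thesis
    unfolding g_def N_def \<nu>_def by auto
qed

lemma flat_two_values:
  assumes "i \<le> Suc k" and "flat i F" and "F \<subseteq> H"
  shows "2 * (\<Sum>v\<in>F. w v) = 2 ^ i \<or>
    2 * (\<Sum>v\<in>F. w v) = 2 * (\<Sum>v\<in>H. w v) - (2 ^ (Suc (Suc k) - i) - 1) * 2 ^ i"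
  using assms
proof (induction i arbitrary: F rule: inc_induct)
  case base
  then show ?case
    using hyperplane_two_values by simp
next
  case (step i)
  then show ?case
    using flat_two_values_step[of i F] by simp
qed

end

lemma norm_gap_nonzero_hyperplanes:
  fixes w :: "'a \<Rightarrow> real"
  assumes H: "flat (Suc (Suc k)) H"
    and gap_below: "\<And>i F. flat i F \<Longrightarrow> F \<subseteq> H \<Longrightarrow> i \<le> Suc k \<Longrightarrow> norm_gap i (\<Sum>v\<in>F. w v)"
    and hyperplane_nonzero: "\<And>K. flat (Suc k) K \<Longrightarrow> K \<subseteq> H \<Longrightarrow> (\<Sum>v\<in>K. w v) \<noteq> 0"
    and not_half: "\<And>v. v \<in> H \<Longrightarrow> 2 * w v \<noteq> 1"
  shows "norm_gap (Suc (Suc k)) (\<Sum>v\<in>H. w v)"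
proof (rule ccontr)
  define N where "N = (\<Sum>v\<in>H. w v)"
  define P :: real where "P = 2 ^ Suc (Suc k)"
  assume not_gap: "\<not> norm_gap (Suc (Suc k)) (\<Sum>v\<in>H. w v)"
  have point: "2 * w v = 2 * N - (P - 1)" if v: "v \<in> H" for v
  proof -
    have "flat 0 {v}"
      using flat_0_iff v flat_subset[OF H] by blast
    then show ?thesis
      using flat_two_values[OF H gap_below hyperplane_nonzero not_gap, of 0 "{v}"] v not_half[OF v]
      unfolding N_def P_def by simp
  qed
  have "2 * N = (\<Sum>v\<in>H. 2 * w v)"
    unfolding N_def by (simp add: sum_distrib_left)
  also have "\<dots> = P * (2 * N - (P - 1))"
    using point card_flat[OF H] unfolding P_def by simp
  finally have "(P - 1) * (2 * N - P) = 0"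
    by (simp add: algebra_simps)
  moreover have "P > 1"
    unfolding P_def by (rule one_less_power) simp_all
  ultimately have "2 * N = P"
    by simp
  then show False
    using not_gap unfolding N_def P_def norm_gap_def by simp
qed

section \<open>The norm gap\<close>

lemma norm_gap_zero_hyperplane:
  assumes IH: "\<And>K y. flat (Suc k) K \<Longrightarrow> flat_divisible K y \<Longrightarrow> norm_gap (Suc k) (\<Sum>v\<in>K. (y v)\<^sup>2)"
    and H: "flat (Suc (Suc k)) H" and K: "flat (Suc k) K" "K \<subseteq> H" and div: "flat_divisible H x"
    and zero: "(\<Sum>v\<in>K. (x v)\<^sup>2) = 0"
  shows "norm_gap (Suc (Suc k)) (\<Sum>v\<in>H. (x v)\<^sup>2)"
proof -
  have vanish: "x v = 0" if "v \<in> K" for v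
    using zero that sum_nonneg_eq_0_iff[OF flat_finite[OF K(1)], of "\<lambda>v. (x v)\<^sup>2"] by simp
  obtain c where "c \<in> V" "add c ` K = H - K" "add c ` H = H"
    by (rule hyperplane_complement[OF H K])
  then have "flat (Suc k) (H - K)"
    using flat_translate[OF K(1)] by metis
  moreover have "x v = 0" if "v \<in> H - (H - K)" for v
    using vanish that by blast
  ultimately show ?thesis
    using norm_gap_supported_hyperplane[OF IH H _ _ div] by blast
qed

lemma norm_gap_sum_squares:
  assumes "flat j H" and "flat_divisible H x"
  shows "norm_gap j (\<Sum>v\<in>H. (x v)\<^sup>2)"
  using assms
proof (induction j arbitrary: H x rule: less_induct)
  case (less j)
  have ints: "x v \<in> \<int>" if "v \<in> H" for v
    using flat_divisible_Ints[OF less.prems(2) that] that flat_subset[OF less.prems(1)] by blast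
  show ?case
  proof (cases "j \<le> 1")
    case True
    then show ?thesis
      using norm_gap_Ints_le_1 ints by blast
  next
    case False
    define k where "k = j - 2"
    have j: "j = Suc (Suc k)"
      using False unfolding k_def by simp
    have H: "flat (Suc (Suc k)) H"
      using less.prems(1) j by simp
    have IH: "norm_gap i (\<Sum>v\<in>F. (y v)\<^sup>2)" if "i \<le> Suc k" "flat i F" "flat_divisible F y" for i F y
      using less.IH[of i F y] that j by simp
    have "norm_gap (Suc (Suc k)) (\<Sum>v\<in>H. (x v)\<^sup>2)"
    proof (cases "\<exists>K. flat (Suc k) K \<and> K \<subseteq> H \<and> (\<Sum>v\<in>K. (x v)\<^sup>2) = 0")
      case True
      then show ?thesis
        using norm_gap_zero_hyperplane[OF _ H _ _ less.prems(2)] IH by blast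
    next
      case False
      show ?thesis
      proof (rule norm_gap_nonzero_hyperplanes[OF H])
        show "norm_gap i (\<Sum>v\<in>F. (x v)\<^sup>2)" if "flat i F" "F \<subseteq> H" "i \<le> Suc k" for i F
          using IH that flat_divisible_mono[OF less.prems(2)] by blast
        show "(\<Sum>v\<in>K. (x v)\<^sup>2) \<noteq> 0" if "flat (Suc k) K" "K \<subseteq> H" for K
          using False that by blast
        show "2 * (x v)\<^sup>2 \<noteq> 1" if "v \<in> H" for v
          using Ints_two_mult_square_neq_1[OF ints[OF that]] .
      qed
    qed
    then show ?thesis
      using j by simp
  qed
qed

section \<open>The Barnes--Wall lattice\<close>

lemma flat_divisible_int_combination:
  assumes "finite G" and "\<And>g. g \<in> G \<Longrightarrow> flat_divisible H g"
  shows "flat_divisible H (\<lambda>v. \<Sum>g\<in>G. of_int (c g) * g v)"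
  unfolding flat_divisible_def
proof (intro allI impI)
  fix i F
  assume "flat i F" "F \<subseteq> H"
  then have parts: "pow2_dvd (i div 2) (\<Sum>v\<in>F. g v)" if "g \<in> G" for g
    using assms(2)[OF that] unfolding flat_divisible_def by blast
  have "pow2_dvd (i div 2) (\<Sum>g\<in>G. of_int (c g) * (\<Sum>v\<in>F. g v))"
    by (rule pow2_dvd_sum[OF assms(1)]) (rule pow2_dvd_mult_of_int[OF parts])
  then show "pow2_dvd (i div 2) (\<Sum>v\<in>F. \<Sum>g\<in>G. of_int (c g) * g v)"
    by (simp add: sum_distrib_left sum.swap[of _ F])
qed

lemma flat_divisible_scaled_indicator:
  assumes U: "flat r U" and r: "r \<le> M"
  shows "flat_divisible V (\<lambda>v. 2 ^ ((M - r) div 2) * (if v \<in> U then 1 else 0))"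
  unfolding flat_divisible_def
proof (intro allI impI)
  fix i F
  assume F: "flat i F" "F \<subseteq> V"
  have "(\<Sum>v\<in>F. (2::real) ^ ((M - r) div 2) * (if v \<in> U then 1 else 0))
      = 2 ^ ((M - r) div 2) * real (card (F \<inter> U))"
    using flat_finite[OF F(1)] by (simp add: sum_distrib_left[symmetric] sum.If_cases Int_def)
  moreover have "pow2_dvd (i div 2) (2 ^ ((M - r) div 2) * real (card (F \<inter> U)))"
  proof (cases "F \<inter> U = {}")
    case False
    obtain t where t: "flat t (F \<inter> U)" "i + r \<le> t + M"
      by (rule flat_inter[OF F(1) U False flat_V F(2) flat_subset[OF U]])
    then have "i div 2 \<le> (M - r) div 2 + t"
      using r by linarith
    then show ?thesis
      using pow2_dvd_power card_flat[OF t(1)] by (simp flip: power_add)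
  qed simp
  ultimately show "pow2_dvd (i div 2) (\<Sum>v\<in>F. 2 ^ ((M - r) div 2) * (if v \<in> U then 1 else 0))"
    by simp
qed

end

lemma f2_space_Vm: "f2_space (Vm m) vadd (vzero m) m"
proof
  have length_vadd: "length (vadd u v) = m" if "length u = m" "length v = m" for u v
    using that unfolding vadd_def by simp
  have nth_vadd: "vadd u v ! k = (u ! k \<noteq> v ! k)" if "length u = m" "length v = m" "k < m" for u v k
    using that unfolding vadd_def by simp
  have Vm_lists: "Vm m = {xs. set xs \<subseteq> (UNIV::bool set) \<and> length xs = m}"
    unfolding Vm_def by simp
  show "finite (Vm m)"
    unfolding Vm_lists by (rule finite_lists_length_eq) simp
  show "card (Vm m) = 2 ^ m"
    using card_lists_length_eq[of "UNIV::bool set" m] unfolding Vm_lists by simp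
  show "vzero m \<in> Vm m"
    unfolding vzero_def Vm_def by simp
  fix u v w
  assume "u \<in> Vm m" "v \<in> Vm m" "w \<in> Vm m"
  then have "length u = m" "length v = m" "length w = m"
    unfolding Vm_def by simp_all
  then show "vadd (vzero m) u = u" "vadd u u = vzero m" "vadd u v \<in> Vm m" "vadd u v = vadd v u"
    "vadd (vadd u v) w = vadd u (vadd v w)"
    by (auto intro!: nth_equalityI simp: length_vadd nth_vadd vzero_def Vm_def)
qed

interpretation Vm: f2_space "Vm m" vadd "vzero m" m for m
  by (rule f2_space_Vm)

lemma affine_subspace_dim_iff_flat: "affine_subspace_dim m r U \<longleftrightarrow> Vm.flat m r U"
  unfolding affine_subspace_dim_def Vm.flat_def Vm.linsub_def lin_subspace_def ..

lemma BW_flat_divisible: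
  assumes "x \<in> BW m"
  shows "Vm.flat_divisible m (Vm m) x"
proof -
  obtain G c where G: "finite G" "G \<subseteq> BW_gens m" and x: "x = (\<lambda>v. \<Sum>g\<in>G. of_int (c g) * g v)"
    using assms unfolding BW_def int_span_def by blast
  have "Vm.flat_divisible m (Vm m) g" if g: "g \<in> G" for g
  proof -
    obtain r U where "r \<le> m" "affine_subspace_dim m r U"
      and "g = (\<lambda>v. 2 ^ ((m - r) div 2) * xU U v)"
      using g G(2) unfolding BW_gens_def by blast
    then show ?thesis
      using Vm.flat_divisible_scaled_indicator unfolding affine_subspace_dim_iff_flat xU_def by simp
  qed
  then show ?thesis
    unfolding x by (rule Vm.flat_divisible_int_combination[OF G(1)])
qed

theorem theorem3p3:
  fixes m :: nat and x :: "bool list \<Rightarrow> real"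
  assumes "m \<ge> 1"
    and "x \<in> BW m"
    and "ip m x x > 2 powi (int m - 1)"
  shows "ip m x x \<ge> 2 powi (int m - 1) + 2 powi (int m - 2)"
proof -
  have "norm_gap m (ip m x x)"
    using Vm.norm_gap_sum_squares[OF Vm.flat_V BW_flat_divisible[OF assms(2)]]
    unfolding ip_def by (simp add: power2_eq_square)
  moreover have "2 powi (int m - 1) = (2::real) ^ m / 2"
    and "2 powi (int m - 2) = (2::real) ^ m / 4"
    using power_int_diff[of "2::real" "int m" 1] power_int_diff[of "2::real" "int m" 2] by simp_all
  ultimately show ?thesis
    using assms(3) unfolding norm_gap_def by auto
qed

end
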